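(* Let $ABC$ be a triangle and let $P$ be a point. Let $H_A, H_B, H_C$ be the orthocenters of the triangles $BPC$, $CPA$, $PAB$ respectively, and let $\triangle_A, \triangle_B, \triangle_C$ denote the triangles $AH_BH_C$, $BH_CH_A$, $CH_AH_B$ respectively. Let $\mathcal{H}_P$ be the rectangular hyperbola circumscribed about $ABC$ and passing through $P$. Then the circumcircles of $\triangle_A, \triangle_B, \triangle_C$ pass through a common point, and this point lies on $\mathcal{H}_P$.
   Context: A rectangular hyperbola is a hyperbola whose asymptotes are perpendicular. All triangles involved are assumed nondegenerate. *)

theory Defs
  imports "HOL-Analysis.Analysis"
begin

type_synonym point = "real \<times> real"

definition triangle :: "point \<Rightarrow> point \<Rightarrow> point \<Rightarrow> bool" where
  "triangle A B C \<longleftrightarrow> \<not> collinear {A, B, C}"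

definition is_orthocenter :: "point \<Rightarrow> point \<Rightarrow> point \<Rightarrow> point \<Rightarrow> bool" where
  "is_orthocenter H A B C \<longleftrightarrow> (H - A) \<bullet> (B - C) = 0 \<and> (H - B) \<bullet> (C - A) = 0 \<and> (H - C) \<bullet> (A - B) = 0"

definition on_circumcircle :: "point \<Rightarrow> point \<Rightarrow> point \<Rightarrow> point \<Rightarrow> bool" where
  "on_circumcircle Q X Y Z \<longleftrightarrow> (\<exists>M. dist M X = dist M Y \<and> dist M X = dist M Z \<and> dist M Q = dist M X)"

definition on_conic :: "real \<Rightarrow> real \<Rightarrow> real \<Rightarrow> real \<Rightarrow> real \<Rightarrow> real \<Rightarrow> point \<Rightarrow> bool" where
  "on_conic a b c d e f X \<longleftrightarrow>
     a * (fst X)^2 + b * fst X * snd X + c * (snd X)^2 + d * fst X + e * snd X + f = 0"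

text \<open>The conic is a nondegenerate hyperbola with perpendicular asymptotes:
  nonzero quadratic part, trace a + c = 0 of the quadratic form (perpendicular asymptotes;
  then b^2 - 4ac = b^2 + 4a^2 > 0, so it is of hyperbolic type), and nonzero determinant of
  the 3x3 conic matrix (nondegenerate).\<close>
definition rect_hyperbola :: "real \<Rightarrow> real \<Rightarrow> real \<Rightarrow> real \<Rightarrow> real \<Rightarrow> real \<Rightarrow> bool" where
  "rect_hyperbola a b c d e f \<longleftrightarrow>
     (a, b, c) \<noteq> (0, 0, 0) \<and> a + c = 0 \<and>
     a * (c * f - e^2 / 4) - (b / 2) * (b / 2 * f - e * d / 4) + (d / 2) * (b * e / 4 - c * d / 2) \<noteq> 0"

end

theory Submission
  imports Defs
begin

text \<open>
  A conic whose quadratic part has trace zero and which passes through the vertices of a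
  triangle also passes through its orthocentre, so H_A, H_B, H_C lie on the hyperbola.
  The triangles A H_B H_C, B H_C H_A, C H_A H_B have a common orthocentre K: the altitudes
  of A H_B H_C through H_B and H_C are parallel to PB and PC, and the parallels to PA, PB, PC
  through H_A, H_B, H_C are concurrent. So K lies on the hyperbola too. For a triangle inscribed
  in a rectangular hyperbola with centre Z, the reflection 2Z - K of its orthocentre in Z lies
  on its circumcircle, and by central symmetry on the hyperbola. The first claim needs only
  some rectangular, possibly degenerate, conic through A, B, C, P; one is found in the pencil
  of such conics through A, B, C.
\<close>

definition cross :: "point \<Rightarrow> point \<Rightarrow> real" where
  "cross u v = fst u * snd v - snd u * fst v"

lemma cross_eq_0_iff: "cross u v = 0 \<longleftrightarrow> u = 0 \<or> v = 0 \<or> (\<exists>c. v = c *\<^sub>R u)"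
proof
  assume uv: "cross u v = 0"
  show "u = 0 \<or> v = 0 \<or> (\<exists>c. v = c *\<^sub>R u)"
  proof (cases "fst u = 0")
    case True
    then consider "u = 0" | "snd u \<noteq> 0" by (auto simp: prod_eq_iff)
    then show ?thesis
    proof cases
      case 2
      with True uv have "v = (snd v / snd u) *\<^sub>R u"
        by (simp add: prod_eq_iff cross_def)
      then show ?thesis by blast
    qed simp
  next
    case False
    with uv have "v = (fst v / fst u) *\<^sub>R u"
      by (simp add: prod_eq_iff cross_def) (simp add: field_simps)
    then show ?thesis by blast
  qed
qed (auto simp: cross_def)

lemma cross_diff_left: "cross (x - y) z = cross x z - cross y z"
  by (simp add: cross_def algebra_simps)

lemma cross_mult_cross: "cross x y * cross z w = (x \<bullet> z) * (y \<bullet> w) - (x \<bullet> w) * (y \<bullet> z)"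
  by (simp add: cross_def inner_prod_def algebra_simps)

lemma cross_moment_identity:
  "cross k a * cross b c + cross k b * cross c a + cross k c * cross a b = 0"
  by (simp add: cross_def algebra_simps)

lemma inner_system_solvable:
  fixes u v :: point
  assumes "cross u v \<noteq> 0"
  shows "\<exists>X. X \<bullet> u = r \<and> X \<bullet> v = s"
proof -
  define Y where "Y = (r * snd v - s * snd u, s * fst u - r * fst v)"
  have "Y \<bullet> u = r * cross u v" "Y \<bullet> v = s * cross u v"
    by (simp_all add: Y_def inner_prod_def cross_def algebra_simps)
  with assms have "(Y /\<^sub>R cross u v) \<bullet> u = r \<and> (Y /\<^sub>R cross u v) \<bullet> v = s"
    by simp
  then show ?thesis ..
qed

lemma orthogonal_to_independent_eq_0:
  fixes u v w :: point
  assumes "cross u v \<noteq> 0" "w \<bullet> u = 0" "w \<bullet> v = 0"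
  shows "w = 0"
proof -
  have "fst w * cross u v = (w \<bullet> u) * snd v - (w \<bullet> v) * snd u"
    and "snd w * cross u v = (w \<bullet> v) * fst u - (w \<bullet> u) * fst v"
    by (simp_all add: cross_def inner_prod_def algebra_simps)
  with assms show ?thesis
    by (simp add: prod_eq_iff)
qed

lemma parallel_imp_orthogonal:
  fixes u v w :: point
  assumes "cross u v = 0" "v \<bullet> w = 0" "v \<noteq> 0"
  shows "u \<bullet> w = 0"
  using assms by (auto simp: cross_eq_0_iff)

lemma dist_eq_iff_inner:
  fixes M X Y :: "'a::real_inner"
  shows "dist M X = dist M Y \<longleftrightarrow> 2 * (M \<bullet> (Y - X)) = Y \<bullet> Y - X \<bullet> X"
  unfolding dist_norm norm_eq by (simp add: inner_diff_left inner_diff_right inner_commute) arith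

lemma collinear_iff_cross_eq_0: "collinear {A, B, C} \<longleftrightarrow> cross (B - A) (C - A) = 0"
  using collinear_3[of B A C] by (simp add: insert_commute collinear_lemma cross_eq_0_iff)

lemma triangle_iff_cross: "triangle A B C \<longleftrightarrow> cross (B - A) (C - A) \<noteq> 0"
  by (simp add: triangle_def collinear_iff_cross_eq_0)

lemma triangle_swap: "triangle A B C \<longleftrightarrow> triangle B A C"
  by (simp add: triangle_def insert_commute)

lemma altitude_sum_eq_0:
  fixes H A B C :: "'a::real_inner"
  shows "(H - A) \<bullet> (B - C) + (H - B) \<bullet> (C - A) + (H - C) \<bullet> (A - B) = 0"
  by (simp add: inner_diff_left inner_diff_right inner_commute)

lemma is_orthocenter_iff:
  "is_orthocenter H A B C \<longleftrightarrow> (H - B) \<bullet> (C - A) = 0 \<and> (H - C) \<bullet> (A - B) = 0"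
  using altitude_sum_eq_0[of H A B C] unfolding is_orthocenter_def by linarith

lemma is_orthocenter_swap: "is_orthocenter H A B C \<longleftrightarrow> is_orthocenter H B A C"
  unfolding is_orthocenter_def by (auto simp: inner_diff_right)

lemma orthocenter_exists:
  assumes "triangle A B C"
  shows "\<exists>H. is_orthocenter H A B C"
proof -
  have "cross (C - A) (A - B) = cross (B - A) (C - A)"
    by (simp add: cross_def algebra_simps)
  with assms obtain H where "H \<bullet> (C - A) = B \<bullet> (C - A)" "H \<bullet> (A - B) = C \<bullet> (A - B)"
    using inner_system_solvable unfolding triangle_iff_cross by metis
  then have "is_orthocenter H A B C"
    by (simp add: is_orthocenter_iff inner_diff_left)
  then show ?thesis ..
qed

lemma circumcenter_exists:
  assumes "triangle A B C"
  shows "\<exists>M. dist M A = dist M B \<and> dist M A = dist M C"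
proof -
  obtain M where "M \<bullet> (B - A) = (B \<bullet> B - A \<bullet> A) / 2" "M \<bullet> (C - A) = (C \<bullet> C - A \<bullet> A) / 2"
    using assms inner_system_solvable unfolding triangle_iff_cross by blast
  then show ?thesis
    by (intro exI[of _ M]) (simp add: dist_eq_iff_inner)
qed

lemma orthocenter_inner_eqs:
  assumes "is_orthocenter H X P Y"
  shows "(H - P) \<bullet> (X - P) = (X - P) \<bullet> (Y - P)" "(H - P) \<bullet> (Y - P) = (X - P) \<bullet> (Y - P)"
  using assms unfolding is_orthocenter_def
  by (simp_all add: inner_diff_left inner_diff_right inner_commute)

lemma orthocenter_moment:
  assumes "is_orthocenter H Y P Z"
  shows "cross (H - P) (X - P) * cross (Y - P) (Z - P)
    = ((Y - P) \<bullet> (Z - P)) * ((X - P) \<bullet> (Z - P) - (X - P) \<bullet> (Y - P))"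
  using orthocenter_inner_eqs[OF assms]
  by (simp add: cross_mult_cross inner_commute right_diff_distrib)

lemma parallels_through_orthocenters_concurrent:
  assumes "is_orthocenter HA B P C" "is_orthocenter HB C P A" "is_orthocenter HC A P B"
    and "cross (B - P) (C - P) \<noteq> 0"
    and "cross (K - HB) (B - P) = 0" "cross (K - HC) (C - P) = 0"
  shows "cross (K - HA) (A - P) = 0"
proof -
  define a b c where "a = A - P" and "b = B - P" and "c = C - P"
  \<comment> \<open>The cyclic moment sum vanishes for every point; for the orthocentres its terms cancel.\<close>
  have "cross (HA - P) a * cross b c + cross (HB - P) b * cross c a
      + cross (HC - P) c * cross a b = 0"
    unfolding a_def b_def c_def orthocenter_moment[OF assms(1)] orthocenter_moment[OF assms(2)]
      orthocenter_moment[OF assms(3)]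
    by (simp add: inner_commute algebra_simps)
  moreover have "cross (K - P) a * cross b c + cross (K - P) b * cross c a
      + cross (K - P) c * cross a b = 0"
    by (rule cross_moment_identity)
  moreover have "cross (K - P) b = cross (HB - P) b" "cross (K - P) c = cross (HC - P) c"
    using assms(5,6) unfolding b_def c_def by (simp_all add: cross_diff_left)
  ultimately have "(cross (K - P) a - cross (HA - P) a) * cross b c = 0"
    by algebra
  with assms(4) show ?thesis
    by (simp add: a_def b_def c_def cross_diff_left)
qed

lemma common_orthocenter_of_orthocenter_triangles:
  assumes "triangle B P C" "triangle P A B"
    and HA: "is_orthocenter HA B P C" and HB: "is_orthocenter HB C P A"
    and HC: "is_orthocenter HC P A B"
    and "triangle A HB HC" and K: "is_orthocenter K A HB HC"
  shows "is_orthocenter K B HC HA" "is_orthocenter K C HA HB"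
proof -
  have BPC: "cross (B - P) (C - P) \<noteq> 0" and "cross (A - P) (B - P) \<noteq> 0"
    using assms(1,2) triangle_swap[of B P C] by (simp_all add: triangle_iff_cross)
  then have "A - P \<noteq> 0" "B - P \<noteq> 0" "C - P \<noteq> 0"
    by (auto simp: cross_def)
  have "HC - A \<noteq> 0" "A - HB \<noteq> 0"
    using assms(6) by (auto simp: triangle_iff_cross cross_def)
  have "(HC - A) \<bullet> (K - HB) = 0" "(HC - A) \<bullet> (B - P) = 0"
    using K HC by (simp_all add: is_orthocenter_def inner_commute)
  with \<open>HC - A \<noteq> 0\<close> have KB: "cross (K - HB) (B - P) = 0"
    using orthogonal_to_independent_eq_0 by blast
  have "(A - HB) \<bullet> (K - HC) = 0" "(A - HB) \<bullet> (C - P) = 0"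
    using K HB unfolding is_orthocenter_def
    by (simp_all add: inner_diff_left inner_diff_right inner_commute)
  with \<open>A - HB \<noteq> 0\<close> have KC: "cross (K - HC) (C - P) = 0"
    using orthogonal_to_independent_eq_0 by blast
  have KA: "cross (K - HA) (A - P) = 0"
    using HC by (intro parallels_through_orthocenters_concurrent[OF HA HB _ BPC KB KC])
      (simp add: is_orthocenter_swap)
  have "(C - P) \<bullet> (HA - B) = 0" "(A - P) \<bullet> (B - HC) = 0"
    "(A - P) \<bullet> (HB - C) = 0" "(B - P) \<bullet> (C - HA) = 0"
    using HA HB HC unfolding is_orthocenter_def
    by (simp_all add: inner_diff_left inner_diff_right inner_commute)
  with KA KB KC \<open>A - P \<noteq> 0\<close> \<open>B - P \<noteq> 0\<close> \<open>C - P \<noteq> 0\<close>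
  show "is_orthocenter K B HC HA" "is_orthocenter K C HA HB"
    by (auto simp: is_orthocenter_iff intro: parallel_imp_orthogonal)
qed

text \<open>
  Trace zero of the quadratic part means perpendicular asymptotic directions; degenerate conics,
  pairs of perpendicular lines, are included.
\<close>

definition rect_conic :: "real \<Rightarrow> real \<Rightarrow> real \<Rightarrow> bool" where
  "rect_conic a b c \<longleftrightarrow> (a, b, c) \<noteq> (0, 0, 0) \<and> a + c = 0"

lemma rect_conic_iff:
  "rect_conic a b c \<longleftrightarrow> c = -a \<and> b^2 - 4 * a * c > 0"
proof (cases "c = -a")
  case True
  then have "b^2 - 4 * a * c > 0 \<longleftrightarrow> b^2 + (2 * a)^2 > 0"
    by (simp add: power2_eq_square algebra_simps)
  also have "\<dots> \<longleftrightarrow> b \<noteq> 0 \<or> a \<noteq> 0"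
    by (simp only: sum_power2_gt_zero_iff) simp
  finally show ?thesis
    using True unfolding rect_conic_def by auto
qed (auto simp: rect_conic_def)

text \<open>The gradient of the defining polynomial of the conic vanishes at a centre.\<close>

definition conic_center :: "real \<Rightarrow> real \<Rightarrow> real \<Rightarrow> real \<Rightarrow> real \<Rightarrow> point \<Rightarrow> bool" where
  "conic_center a b c d e Z \<longleftrightarrow>
     2 * a * fst Z + b * snd Z + d = 0 \<and> b * fst Z + 2 * c * snd Z + e = 0"

lemma conic_center_exists:
  assumes "b^2 \<noteq> 4 * a * c"
  shows "\<exists>Z. conic_center a b c d e Z"
proof -
  have "cross (2 * a, b) (b, 2 * c) \<noteq> 0"
    using assms by (simp add: cross_def power2_eq_square)
  then obtain Z where "Z \<bullet> (2 * a, b) = - d" "Z \<bullet> (b, 2 * c) = - e"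
    using inner_system_solvable by blast
  then have "conic_center a b c d e Z"
    by (simp add: conic_center_def inner_prod_def algebra_simps)
  then show ?thesis ..
qed

lemma on_conic_point_reflection:
  assumes "conic_center a b c d e Z" "on_conic a b c d e f X"
  shows "on_conic a b c d e f (2 *\<^sub>R Z - X)"
proof -
  let ?g = "\<lambda>X. a * (fst X)^2 + b * fst X * snd X + c * (snd X)^2 + d * fst X + e * snd X + f"
  have "?g (2 *\<^sub>R Z - X) = ?g X
      + 2 * (fst Z - fst X) * (2 * a * fst Z + b * snd Z + d)
      + 2 * (snd Z - snd X) * (b * fst Z + 2 * c * snd Z + e)"
    by (simp add: power2_eq_square algebra_simps)
  with assms show ?thesis
    unfolding conic_center_def on_conic_def by simp
qed

lemma orthocenter_on_rect_conic:
  assumes "triangle A B C" "is_orthocenter H A B C" "a + c = 0"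
    and "on_conic a b c d e f A" "on_conic a b c d e f B" "on_conic a b c d e f C"
  shows "on_conic a b c d e f H"
  using assms unfolding triangle_iff_cross is_orthocenter_iff on_conic_def cross_def inner_prod_def
  by (simp, elim conjE, algebra)

text \<open>Equivalently, the centre of the conic lies on the nine-point circle of A B C.\<close>

lemma reflected_orthocenter_on_circumcircle:
  assumes "triangle A B C" "is_orthocenter H A B C" "rect_conic a b c"
    and "on_conic a b c d e f A" "on_conic a b c d e f B" "on_conic a b c d e f C"
    and "conic_center a b c d e Z"
  shows "on_circumcircle (2 *\<^sub>R Z - H) A B C"
proof -
  obtain M where M: "dist M A = dist M B" "dist M A = dist M C"
    using circumcenter_exists[OF assms(1)] by blast
  have "c = -a" "b^2 - 4 * a * c \<noteq> 0"
    using assms(3) by (auto simp: rect_conic_iff)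
  moreover have "(H - B) \<bullet> (C - A) = 0" "(H - C) \<bullet> (A - B) = 0"
    using assms(2) by (simp_all add: is_orthocenter_iff)
  moreover have "2 * a * fst Z + b * snd Z + d = 0" "b * fst Z + 2 * c * snd Z + e = 0"
    using assms(7) by (simp_all add: conic_center_def)
  ultimately have "dist M (2 *\<^sub>R Z - H) = dist M A"
    using assms(1,4-6) M
    unfolding dist_eq_iff_inner triangle_iff_cross on_conic_def cross_def inner_prod_def
      fst_diff snd_diff fst_scaleR snd_scaleR real_scaleR_def inner_real_def
    by algebra
  with M show ?thesis
    unfolding on_circumcircle_def by metis
qed

lemma conic_through_triangle_exists:
  assumes "triangle A B C"
  shows "\<exists>d e f. \<forall>X\<in>{A, B, C}. on_conic a b c d e f X"
proof -
  define q where "q X = a * (fst X)^2 + b * fst X * snd X + c * (snd X)^2" for X :: point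
  obtain L where L: "L \<bullet> (B - A) = q A - q B" "L \<bullet> (C - A) = q A - q C"
    using assms inner_system_solvable unfolding triangle_iff_cross by blast
  have on_conic_L: "on_conic a b c (fst L) (snd L) (- q A - L \<bullet> A) X \<longleftrightarrow> q X - q A + L \<bullet> (X - A) = 0"
    for X unfolding on_conic_def q_def by (simp add: inner_prod_def algebra_simps)
  have "on_conic a b c (fst L) (snd L) (- q A - L \<bullet> A) X" if "X \<in> {A, B, C}" for X
    using that L unfolding on_conic_L by auto
  then show ?thesis by blast
qed

lemma rect_conic_through_four_points_exists:
  assumes "triangle A B C"
  shows "\<exists>a b c d e f. rect_conic a b c \<and> (\<forall>X\<in>{A, B, C, P}. on_conic a b c d e f X)"
proof -
  define v where "v a b c d e f X =
      a * (fst X)^2 + b * fst X * snd X + c * (snd X)^2 + d * fst X + e * snd X + f"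
    for a b c d e f :: real and X :: point
  have on_conic_v: "on_conic a b c d e f X \<longleftrightarrow> v a b c d e f X = 0" for a b c d e f X
    by (simp add: on_conic_def v_def)
  obtain d1 e1 f1 where C1: "\<forall>X\<in>{A, B, C}. v 1 0 (-1) d1 e1 f1 X = 0"
    using conic_through_triangle_exists[OF assms] unfolding on_conic_v by blast
  obtain d2 e2 f2 where C2: "\<forall>X\<in>{A, B, C}. v 0 1 0 d2 e2 f2 X = 0"
    using conic_through_triangle_exists[OF assms] unfolding on_conic_v by blast
  have pencil: "v s t (- s) (s * d1 + t * d2) (s * e1 + t * e2) (s * f1 + t * f2) X
      = s * v 1 0 (-1) d1 e1 f1 X + t * v 0 1 0 d2 e2 f2 X" for s t X
    by (simp add: v_def algebra_simps)
  obtain s t where st: "(s, t) \<noteq> (0, 0)" "s * v 1 0 (-1) d1 e1 f1 P + t * v 0 1 0 d2 e2 f2 P = 0"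
  proof (cases "v 1 0 (-1) d1 e1 f1 P = 0")
    case True
    then show ?thesis by (intro that[of 1 0]) simp_all
  next
    case False
    then show ?thesis by (intro that[of "v 0 1 0 d2 e2 f2 P" "- v 1 0 (-1) d1 e1 f1 P"]) simp_all
  qed
  have "rect_conic s t (- s)"
    using st(1) by (auto simp: rect_conic_def)
  moreover have
    "\<forall>X\<in>{A, B, C, P}. v s t (- s) (s * d1 + t * d2) (s * e1 + t * e2) (s * f1 + t * f2) X = 0"
    using C1 C2 st(2) by (simp add: pencil)
  ultimately show ?thesis
    unfolding on_conic_v by blast
qed

lemma circumcircles_meet_on_rect_conic:
  assumes "triangle B P C" "triangle C P A" "triangle P A B"
    and HA: "is_orthocenter HA B P C" and HB: "is_orthocenter HB C P A"
    and HC: "is_orthocenter HC P A B"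
    and "triangle A HB HC" "triangle B HC HA" "triangle C HA HB"
    and conic: "rect_conic a b c" "\<forall>X\<in>{A, B, C, P}. on_conic a b c d e f X"
  shows "\<exists>Q. on_circumcircle Q A HB HC \<and> on_circumcircle Q B HC HA \<and> on_circumcircle Q C HA HB
    \<and> on_conic a b c d e f Q"
proof -
  have "a + c = 0" and "b^2 \<noteq> 4 * a * c"
    using conic(1) unfolding rect_conic_iff by linarith+
  have on_vertices: "on_conic a b c d e f A" "on_conic a b c d e f B" "on_conic a b c d e f C"
    using conic(2) by simp_all
  have on_orthocenters:
    "on_conic a b c d e f HA" "on_conic a b c d e f HB" "on_conic a b c d e f HC"
    using orthocenter_on_rect_conic \<open>a + c = 0\<close> assms(1-6) conic(2) by simp_all
  obtain K where KA: "is_orthocenter K A HB HC"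
    using orthocenter_exists[OF assms(7)] by blast
  have KB: "is_orthocenter K B HC HA" and KC: "is_orthocenter K C HA HB"
    using common_orthocenter_of_orthocenter_triangles[OF assms(1,3) HA HB HC assms(7) KA]
    by simp_all
  have "on_conic a b c d e f K"
    using orthocenter_on_rect_conic[OF assms(7) KA \<open>a + c = 0\<close>] on_vertices on_orthocenters by simp
  obtain Z where Z: "conic_center a b c d e Z"
    using conic_center_exists \<open>b^2 \<noteq> 4 * a * c\<close> by blast
  note reflected = reflected_orthocenter_on_circumcircle[OF _ _ conic(1) _ _ _ Z]
  show ?thesis
  proof (intro exI conjI)
    show "on_circumcircle (2 *\<^sub>R Z - K) A HB HC"
      by (rule reflected[OF assms(7) KA]) (use on_vertices on_orthocenters in simp_all)
    show "on_circumcircle (2 *\<^sub>R Z - K) B HC HA"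
      by (rule reflected[OF assms(8) KB]) (use on_vertices on_orthocenters in simp_all)
    show "on_circumcircle (2 *\<^sub>R Z - K) C HA HB"
      by (rule reflected[OF assms(9) KC]) (use on_vertices on_orthocenters in simp_all)
    show "on_conic a b c d e f (2 *\<^sub>R Z - K)"
      by (rule on_conic_point_reflection[OF Z \<open>on_conic a b c d e f K\<close>])
  qed
qed

theorem corollary2p3:
  fixes A B C P HA HB HC :: point
  assumes "triangle A B C"
    and "triangle B P C" and "triangle C P A" and "triangle P A B"
    and "is_orthocenter HA B P C" and "is_orthocenter HB C P A" and "is_orthocenter HC P A B"
    and "triangle A HB HC" and "triangle B HC HA" and "triangle C HA HB"
  shows "(\<exists>Q. on_circumcircle Q A HB HC \<and> on_circumcircle Q B HC HA \<and> on_circumcircle Q C HA HB)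
    \<and> (\<forall>a b c d e f. rect_hyperbola a b c d e f \<and> on_conic a b c d e f A \<and> on_conic a b c d e f B
          \<and> on_conic a b c d e f C \<and> on_conic a b c d e f P \<longrightarrow>
        (\<exists>Q. on_circumcircle Q A HB HC \<and> on_circumcircle Q B HC HA \<and> on_circumcircle Q C HA HB
             \<and> on_conic a b c d e f Q))"
proof -
  note meet = circumcircles_meet_on_rect_conic[OF assms(2-10)]
  obtain a b c d e f where "rect_conic a b c" "\<forall>X\<in>{A, B, C, P}. on_conic a b c d e f X"
    using rect_conic_through_four_points_exists[OF assms(1)] by blast
  moreover have "rect_conic a b c" if "rect_hyperbola a b c d e f" for a b c d e f
    using that by (simp add: rect_hyperbola_def rect_conic_def)
  ultimately show ?thesis
    using meet by blast
qed

end
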